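(* Let $p\geq 2$ be an even integer and let $U_p=\bigcup_{n\in 2\mathbb Z_+}\mathbb Z_p^n$. Let $\boldsymbol a,\boldsymbol b\in U_p$ be equivalent (in the sense defined in the context). Then $\mu_p(\boldsymbol a)=\mu_p(\boldsymbol b)$.
   Context: $\mathbb Z_+$ denotes the positive integers and $\mathbb Z_p=\mathbb Z/p\mathbb Z$. Two elements of $U_p$ are called equivalent if they are related by a finite sequence of the following transformations of $(a_1,\ldots,a_n)\in\mathbb Z_p^n$ ($n$ even): (Op1) $(a_1,\ldots,a_n)\to(a_2,\ldots,a_n,a_1)$; (Op2) $(a_1,\ldots,a_n)\to(a, a_2+(-1)^2(a_1-a),\ldots,a_i+(-1)^i(a_1-a),\ldots,a_n+(-1)^n(a_1-a))$ for any $a\in\mathbb Z_p$; (Op3) $(a_1,\ldots,a_n)\to(a, a_1-a_2+a,\ldots,a_1-a_i+a,\ldots,a_1-a_n+a)$ for any $a\in\mathbb Z_p$; (Op4) $(a_1,\ldots,a_n)\to(a_1,-a_1+a_2+a_3,a_3,\ldots,a_n)$ when $n>3$. For $p$ even, parity of elements of $\mathbb Z_p$ is well defined. For a tuple $(b_1,\ldots,b_n)$ of elements of $\mathbb Z_p$, let $E(b_1,\ldots,b_n)=\#\{i\in\{1,\ldots,n\}: b_i\equiv 0\pmod 2\}$ and $O(b_1,\ldots,b_n)=\#\{i: b_i\equiv 1\pmod 2\}$. Define $\mu_p:U_p\to\mathbb Z$ by $\mu_p(a_1,\ldots,a_n)=E(a_1+a_2,a_2+a_3,\ldots,a_n+a_1)-O(a_1+a_2,a_2+a_3,\ldots,a_n+a_1)$.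 *)

theory Defs
  imports Main
begin

text \<open>Elements of Z_p are represented by integers in {0..<p}; a tuple in Z_p^n
  is a list of length n with entries in {0..<p}. Indices in lists are 0-based,
  so list position i corresponds to the paper's index i+1.\<close>

definition U :: "nat \<Rightarrow> int list set" where
  "U p = {xs. length xs > 0 \<and> even (length xs) \<and> set xs \<subseteq> {0..<int p}}"

definition op1 :: "int list \<Rightarrow> int list" where
  "op1 xs = rotate1 xs"

definition op2 :: "nat \<Rightarrow> int \<Rightarrow> int list \<Rightarrow> int list" where
  "op2 p a xs = a # map (\<lambda>i. (xs ! i + (-1) ^ (i + 1) * (xs ! 0 - a)) mod int p)
                         [1..<length xs]"

definition op3 :: "nat \<Rightarrow> int \<Rightarrow> int list \<Rightarrow> int list" where
  "op3 p a xs = a # map (\<lambda>i. (xs ! 0 - xs ! i + a) mod int p) [1..<length xs]"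

definition op4 :: "nat \<Rightarrow> int list \<Rightarrow> int list" where
  "op4 p xs = xs[1 := (- (xs ! 0) + xs ! 1 + xs ! 2) mod int p]"

definition step :: "nat \<Rightarrow> int list \<Rightarrow> int list \<Rightarrow> bool" where
  "step p xs ys \<longleftrightarrow> xs \<in> U p \<and>
     (ys = op1 xs
      \<or> (\<exists>a\<in>{0..<int p}. ys = op2 p a xs \<or> ys = op3 p a xs)
      \<or> (length xs > 3 \<and> ys = op4 p xs))"

definition equivalent :: "nat \<Rightarrow> int list \<Rightarrow> int list \<Rightarrow> bool" where
  "equivalent p = (\<lambda>x y. step p x y \<or> step p y x)\<^sup>*\<^sup>*"

definition Ecount :: "nat \<Rightarrow> int list \<Rightarrow> nat" where
  "Ecount p bs = card {i. i < length bs \<and> even (bs ! i mod int p)}"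

definition Ocount :: "nat \<Rightarrow> int list \<Rightarrow> nat" where
  "Ocount p bs = card {i. i < length bs \<and> odd (bs ! i mod int p)}"

definition cyc_sums :: "nat \<Rightarrow> int list \<Rightarrow> int list" where
  "cyc_sums p xs = map (\<lambda>i. (xs ! i + xs ! ((i + 1) mod length xs)) mod int p)
                        [0..<length xs]"

definition mu :: "nat \<Rightarrow> int list \<Rightarrow> int" where
  "mu p xs = int (Ecount p (cyc_sums p xs)) - int (Ocount p (cyc_sums p xs))"

end

theory Submission
  imports Defs
begin

text \<open>For even \<open>p\<close> the parity of a residue mod \<open>p\<close> is well defined, and \<open>\<mu>\<^sub>p\<close> only sees
  the cyclic parity pattern of a tuple: it counts the neighbouring pairs of equal parity
  minus those of different parity. Op1 rotates this pattern. Op2 and Op3 add, modulo 2,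
  one and the same constant to every entry (\<open>(-1)\<^sup>i(a\<^sub>1 - a)\<close> and \<open>a\<^sub>1 - a\<^sub>i + a\<close> have the
  parities of \<open>a\<^sub>1 - a\<close> and \<open>a\<^sub>i + a\<^sub>1 + a\<close>), so they keep or flip all parities at once.
  Op4 changes only the parity of \<open>a\<^sub>2\<close>, and in a way that swaps the agreement of the
  pairs \<open>(a\<^sub>1, a\<^sub>2)\<close> and \<open>(a\<^sub>2, a\<^sub>3)\<close>.\<close>

definition cyclic_agreement :: "bool list \<Rightarrow> int" where
  "cyclic_agreement bs = sum_list (map2 (\<lambda>x y. if x = y then 1 else -1) bs (rotate1 bs))"

lemma zip_rotate1:
  "length xs = length ys \<Longrightarrow> zip (rotate1 xs) (rotate1 ys) = rotate1 (zip xs ys)"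
  by (cases xs; cases ys) auto

lemma sum_list_rotate1:
  fixes xs :: "'a::comm_monoid_add list"
  shows "sum_list (rotate1 xs) = sum_list xs"
  by (cases xs) (simp_all add: add.commute)

lemma cyclic_agreement_rotate1: "cyclic_agreement (rotate1 bs) = cyclic_agreement bs"
  unfolding cyclic_agreement_def
  by (simp add: zip_rotate1 rotate1_map[symmetric] sum_list_rotate1)

lemma cyclic_agreement_map_eq: "cyclic_agreement (map (\<lambda>b. b = c) bs) = cyclic_agreement bs"
proof -
  have "(\<lambda>(x, y). if x = y then 1 else -1 :: int) \<circ> (\<lambda>(x, y). (x = c, y = c))
      = (\<lambda>(x, y). if x = y then 1 else -1)"
    by auto
  then show ?thesis
    unfolding cyclic_agreement_def rotate1_map zip_map_map map_map by (simp only:)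
qed

lemma cyclic_agreement_swap_second:
  "cyclic_agreement (x # ((x = y) = z) # z # bs) = cyclic_agreement (x # y # z # bs)"
  by (simp add: cyclic_agreement_def)

lemma mu_eq_cyclic_agreement:
  assumes "even p"
  shows "mu p xs = cyclic_agreement (map even xs)"
proof -
  define n where "n = length xs"
  define P where "P i \<longleftrightarrow> even (xs ! i) = even (xs ! ((i + 1) mod n))" for i
  have len: "length (cyc_sums p xs) = n"
    by (simp add: cyc_sums_def n_def)
  have parity: "even (cyc_sums p xs ! i mod int p) \<longleftrightarrow> P i" if "i < n" for i
    using that assms by (simp add: cyc_sums_def n_def P_def dvd_mod_iff)
  have "Ecount p (cyc_sums p xs) = card {i. i < n \<and> P i}"
    unfolding Ecount_def len using parity by metis
  moreover have "Ocount p (cyc_sums p xs) = card {i. i < n \<and> \<not> P i}"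
    unfolding Ocount_def len using parity by metis
  moreover have "cyclic_agreement (map even xs) = (\<Sum>i<n. if P i then 1 else -1)"
    unfolding cyclic_agreement_def sum_list_sum_nth atLeast0LessThan
  proof (rule sum.cong)
    fix i assume "i \<in> {..<n}"
    then have "i < n" "Suc i mod n < n" by auto
    then show "map2 (\<lambda>x y. if x = y then 1 else -1) (map even xs) (rotate1 (map even xs)) ! i
        = (if P i then 1 else -1)"
      by (simp add: nth_rotate1 P_def n_def)
  qed (simp add: n_def)
  ultimately show ?thesis
    by (simp add: mu_def sum.If_cases Int_def)
qed

lemma map_even_op2:
  assumes "even p" and "xs \<noteq> []"
  shows "map even (op2 p a xs) = map (\<lambda>b. b = even (xs ! 0 - a)) (map even xs)"
proof (rule nth_equalityI)
  show "length (map even (op2 p a xs)) = length (map (\<lambda>b. b = even (xs ! 0 - a)) (map even xs))"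
    using assms(2) by (simp add: op2_def)
  fix j assume "j < length (map even (op2 p a xs))"
  then show "map even (op2 p a xs) ! j = map (\<lambda>b. b = even (xs ! 0 - a)) (map even xs) ! j"
    using assms by (cases j) (auto simp: op2_def dvd_mod_iff)
qed

lemma map_even_op3:
  assumes "even p" and "xs \<noteq> []"
  shows "map even (op3 p a xs) = map (\<lambda>b. b = even (xs ! 0 + a)) (map even xs)"
proof (rule nth_equalityI)
  show "length (map even (op3 p a xs)) = length (map (\<lambda>b. b = even (xs ! 0 + a)) (map even xs))"
    using assms(2) by (simp add: op3_def)
  fix j assume "j < length (map even (op3 p a xs))"
  then show "map even (op3 p a xs) ! j = map (\<lambda>b. b = even (xs ! 0 + a)) (map even xs) ! j"
    using assms by (cases j) (auto simp: op3_def dvd_mod_iff)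
qed

lemma mu_op4:
  assumes "even p" and "2 < length xs"
  shows "mu p (op4 p xs) = mu p xs"
proof -
  obtain x y z zs where xs: "xs = x # y # z # zs"
    using assms(2) by (auto simp: numeral_2_eq_2 length_Suc_conv Suc_less_eq2 neq_Nil_conv)
  have parities: "map even (op4 p xs) = even x # ((even x = even y) = even z) # even z # map even zs"
    using assms(1) by (auto simp: xs op4_def dvd_mod_iff)
  have "mu p (op4 p xs) = cyclic_agreement (map even (op4 p xs))"
    using assms(1) by (rule mu_eq_cyclic_agreement)
  also have "\<dots> = cyclic_agreement (map even xs)"
    unfolding parities by (simp only: xs list.map cyclic_agreement_swap_second)
  also have "\<dots> = mu p xs"
    using assms(1) by (rule mu_eq_cyclic_agreement[symmetric])
  finally show ?thesis .
qed

lemma mu_step: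
  assumes "even p" and "step p xs ys"
  shows "mu p ys = mu p xs"
proof -
  have "xs \<noteq> []"
    using assms(2) by (auto simp: step_def U_def)
  from assms(2) consider "ys = op1 xs" | a where "ys = op2 p a xs" | a where "ys = op3 p a xs"
    | "2 < length xs" "ys = op4 p xs"
    unfolding step_def by fastforce
  then show ?thesis
  proof cases
    case 1
    then show ?thesis
      using assms(1) by (simp only: op1_def mu_eq_cyclic_agreement rotate1_map[symmetric]
          cyclic_agreement_rotate1)
  next
    case 2
    then show ?thesis
      using assms(1) \<open>xs \<noteq> []\<close>
      by (metis mu_eq_cyclic_agreement map_even_op2 cyclic_agreement_map_eq)
  next
    case 3
    then show ?thesis
      using assms(1) \<open>xs \<noteq> []\<close>
      by (metis mu_eq_cyclic_agreement map_even_op3 cyclic_agreement_map_eq)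
  next
    case 4
    then show ?thesis
      using assms(1) by (simp add: mu_op4)
  qed
qed

theorem mainTheorem3:
  fixes p :: nat and a b :: "int list"
  assumes "even p" and "p \<ge> 2"
    and "a \<in> U p" and "b \<in> U p"
    and "equivalent p a b"
  shows "mu p a = mu p b"
  using assms(5) unfolding equivalent_def
proof (induction rule: rtranclp_induct)
  case (step y z)
  then show ?case
    using mu_step[OF assms(1)] by metis
qed simp

end
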